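(* Let $w=a_{11}\cdots a_{1c_1}\,a_{21}\cdots a_{2c_2}\cdots a_{k1}\cdots a_{kc_k}$ be a column word with segments of lengths $c_1\ge c_2\ge\dots\ge c_k>0$. Then there exist positive integers $b_{ij}$ ($1\le i\le k$, $1\le j\le c_i$) such that $$w\sim^* b_{k1}b_{k-1,1}\cdots b_{11}b_{12}\cdots b_{1c_1}b_{22}\cdots b_{2c_2}\cdots b_{k2}\cdots b_{kc_k},$$ where $b_{11}>b_{21}>\dots>b_{k1}$ and $b_{11}\cdots b_{1c_1}\,|\,b_{22}\cdots b_{2c_2}\,|\cdots|\,b_{k2}\cdots b_{kc_k}$ is a column word (with segment lengths $c_1,c_2-1,\dots,c_k-1$, empty segments omitted).
   Context: A word is a finite sequence of positive integers. Twisted Knuth equivalence $\sim^*$ is the equivalence relation on words generated by: $u\,b\,a\,c\,v\sim^* u\,b\,c\,a\,v$ whenever $c\le b<a$, and $u\,a\,c\,b\,v\sim^* u\,c\,a\,b\,v$ whenever $c<b\le a$, for positive integers $a,b,c$ and arbitrary (possibly empty) words $u,v$. A column word is a word $a_{11}\cdots a_{1c_1}\,a_{21}\cdots a_{2c_2}\cdots a_{k1}\cdots a_{kc_k}$ (segments separated by $|$) with $c_1\ge c_2\ge\dots\ge c_k>0$ such that each segment is weakly decreasing ($a_{ij}\ge a_{i,j+1}$) and $a_{i+1,c_{i+1}-j}>a_{i,c_i-j}$ for all $0\le j<c_{i+1}$, $1\le i<k$. *)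

theory Defs
  imports Main
begin

type_synonym word = "nat list"

definition pos_word :: "word \<Rightarrow> bool" where
  "pos_word w \<longleftrightarrow> (\<forall>x\<in>set w. 0 < x)"

inductive twisted_step :: "word \<Rightarrow> word \<Rightarrow> bool" where
  tw1: "c \<le> b \<Longrightarrow> b < a \<Longrightarrow> twisted_step (u @ [b, a, c] @ v) (u @ [b, c, a] @ v)"
| tw2: "c < b \<Longrightarrow> b \<le> a \<Longrightarrow> twisted_step (u @ [a, c, b] @ v) (u @ [c, a, b] @ v)"

definition twisted_equiv :: "word \<Rightarrow> word \<Rightarrow> bool" where
  "twisted_equiv = (\<lambda>x y. twisted_step x y \<or> twisted_step y x)\<^sup>*\<^sup>*"

text \<open>A column word given by its list of segments [a_{i1},...,a_{ic_i}] (0-based indices).\<close>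
definition column_word :: "nat list list \<Rightarrow> bool" where
  "column_word cs \<longleftrightarrow>
     (\<forall>s\<in>set cs. s \<noteq> [] \<and> sorted_wrt (\<lambda>x y. x \<ge> y) s) \<and>
     (\<forall>i. Suc i < length cs \<longrightarrow> length (cs ! Suc i) \<le> length (cs ! i)) \<and>
     (\<forall>i j. Suc i < length cs \<and> j < length (cs ! Suc i) \<longrightarrow>
        cs ! Suc i ! (length (cs ! Suc i) - 1 - j) > cs ! i ! (length (cs ! i) - 1 - j))"

end

theory Submission
  imports Defs
begin

text \<open>Induction on the number of columns, building the \<open>b\<^sub>i\<^sub>j\<close> from the right. Suppose
  the word of all columns but the first one, \<open>A\<close>, is already equivalent to a hook word: the
  reversed heads of its columns, then the new second column \<open>D\<close>, then the remaining tails. In front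
  of \<open>A\<close> now stands the increasing sequence of those heads followed by \<open>hd D\<close>. Inserting
  these letters one by one into \<open>A\<close> by column bumping (a letter \<open>u\<close> overwrites the largest
  entry \<open>z < u\<close>, and \<open>z\<close> moves to the front) is a twisted Knuth equivalence; the bumped
  letters become the new heads, decreasing and smaller than the top of the new first column.
  That the new first column and the tail of \<open>D\<close> are again adjacent columns of a column word
  follows from two bounds on how a column grows during insertion, which are carried through
  the induction as an extra invariant.\<close>

section \<open>Twisted Knuth equivalence\<close>

abbreviation nonincreasing :: "nat list \<Rightarrow> bool" where
  "nonincreasing xs \<equiv> sorted_wrt (\<lambda>x y. x \<ge> y) xs"

lemma twisted_equiv_eq_equivclp: "twisted_equiv = equivclp twisted_step"
  unfolding twisted_equiv_def equivclp_def symclp_def ..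

lemma twisted_equiv_refl [simp]: "twisted_equiv w w"
  by (simp add: twisted_equiv_eq_equivclp)

lemma twisted_equiv_sym: "twisted_equiv x y \<Longrightarrow> twisted_equiv y x"
  unfolding twisted_equiv_eq_equivclp by (rule equivclp_sym)

lemma twisted_equiv_trans [trans]: "twisted_equiv x y \<Longrightarrow> twisted_equiv y z \<Longrightarrow> twisted_equiv x z"
  unfolding twisted_equiv_eq_equivclp by (rule equivclp_trans)

lemma twisted_step_imp_equiv: "twisted_step x y \<Longrightarrow> twisted_equiv x y"
  unfolding twisted_equiv_eq_equivclp by (rule r_into_equivclp)

lemma twisted_step_append: "twisted_step x y \<Longrightarrow> twisted_step (p @ x @ s) (p @ y @ s)"
proof (induction rule: twisted_step.induct)
  case (tw1 c b a u v)
  from twisted_step.tw1[OF tw1, of "p @ u" "v @ s"] show ?case by simp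
next
  case (tw2 c b a u v)
  from twisted_step.tw2[OF tw2, of "p @ u" "v @ s"] show ?case by simp
qed

lemma twisted_equiv_append: "twisted_equiv x y \<Longrightarrow> twisted_equiv (p @ x @ s) (p @ y @ s)"
  unfolding twisted_equiv_eq_equivclp
  by (induction rule: equivclp_induct) (auto intro: equivclp_into_equivclp twisted_step_append)

lemma twisted_equiv_set: "twisted_equiv x y \<Longrightarrow> set x = set y"
proof -
  have step: "set x = set y" if "twisted_step x y" for x y
    using that by (induction rule: twisted_step.induct) auto
  show "twisted_equiv x y \<Longrightarrow> set x = set y"
    unfolding twisted_equiv_eq_equivclp by (induction rule: equivclp_induct) (auto dest: step)
qed

lemma twisted_equiv_shift_left:
  assumes "nonincreasing (b # B)" and "b < u"
  shows "twisted_equiv (b # B @ [u]) (b # u # B)"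
  using assms
proof (induction B arbitrary: b)
  case Nil
  then show ?case by simp
next
  case (Cons c B)
  have "twisted_equiv (c # B @ [u]) (c # u # B)"
    using Cons by auto
  then have "twisted_equiv (b # c # B @ [u]) (b # c # u # B)"
    using twisted_equiv_append[of _ _ "[b]" "[]"] by simp
  also have "twisted_equiv \<dots> (b # u # c # B)"
    using Cons.prems twisted_step.tw1[of c b u "[]" B]
    by (auto intro: twisted_equiv_sym twisted_step_imp_equiv)
  finally show ?case by simp
qed

lemma twisted_equiv_shift_front:
  assumes "nonincreasing A" and "\<forall>a\<in>set A. v \<le> a" and "z < v"
  shows "twisted_equiv (A @ [z, v]) (z # A @ [v])"
  using assms
proof (induction A arbitrary: v rule: rev_induct)
  case Nil
  then show ?case by simp
next
  case (snoc a A)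
  have "twisted_equiv ((A @ [a]) @ [z, v]) ((A @ [z, a]) @ [v])"
    using snoc.prems twisted_step.tw2[of z v a A "[]"] by (auto intro: twisted_step_imp_equiv)
  also have "twisted_equiv \<dots> ((z # A @ [a]) @ [v])"
  proof -
    have "twisted_equiv (A @ [z, a]) (z # A @ [a])"
      using snoc by (auto simp: sorted_wrt_append)
    from twisted_equiv_append[OF this, of "[]" "[v]"] show ?thesis by simp
  qed
  finally show ?case by simp
qed

section \<open>Column bumping\<close>

definition bump_index :: "nat \<Rightarrow> nat list \<Rightarrow> nat" where
  "bump_index u X = length (takeWhile (\<lambda>x. u \<le> x) X)"

lemma nonincreasing_nth_le: "nonincreasing X \<Longrightarrow> i \<le> j \<Longrightarrow> j < length X \<Longrightarrow> X ! j \<le> X ! i"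
  by (metis le_less order.refl sorted_wrt_iff_nth_less)

lemma le_nth_if_less_bump_index: "i < bump_index u X \<Longrightarrow> u \<le> X ! i"
  unfolding bump_index_def by (metis nth_mem set_takeWhileD takeWhile_nth)

context
  fixes u :: nat and X :: "nat list"
  assumes ne: "X \<noteq> []" and nonincr: "nonincreasing X" and last_less: "last X < u"
begin

lemma bump_index_less_length: "bump_index u X < length X"
proof -
  have "takeWhile (\<lambda>x. u \<le> x) X \<noteq> X"
    using ne last_less by (metis last_in_set not_le takeWhile_eq_all_conv)
  then show ?thesis
    unfolding bump_index_def by (metis le_neq_implies_less length_takeWhile_le takeWhile_eq_take take_all)
qed

lemma nth_bump_index_less: "X ! bump_index u X < u"
  using nth_length_takeWhile[of "\<lambda>x. u \<le> x" X] bump_index_less_length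
  unfolding bump_index_def by simp

lemma nth_le_nth_bump_index: "i < length X \<Longrightarrow> X ! i < u \<Longrightarrow> X ! i \<le> X ! bump_index u X"
  using le_nth_if_less_bump_index[of i u X] nonincreasing_nth_le[OF nonincr, of "bump_index u X" i]
  by fastforce

lemma nth_le_nth_bump: "X ! i \<le> X[bump_index u X := u] ! i"
  using nth_bump_index_less bump_index_less_length
  by (cases "i = bump_index u X") (auto simp: nth_list_update)

lemma nonincreasing_bump: "nonincreasing (X[bump_index u X := u])"
  unfolding sorted_wrt_iff_nth_less
proof (intro allI impI)
  fix i j assume ij: "i < j" "j < length (X[bump_index u X := u])"
  then show "X[bump_index u X := u] ! j \<le> X[bump_index u X := u] ! i"
    using nth_bump_index_less nonincreasing_nth_le[OF nonincr, of i j]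
      nonincreasing_nth_le[OF nonincr, of "bump_index u X" j] le_nth_if_less_bump_index[of i u X]
    by (cases "i = bump_index u X"; cases "j = bump_index u X") (auto simp: nth_list_update)
qed

text \<open>First \<open>u\<close> travels left to sit just behind \<open>z = X ! bump_index u X\<close>, then \<open>z\<close>
  travels to the front over the entries \<open>\<ge> u\<close>.\<close>

lemma twisted_equiv_bump: "twisted_equiv (X @ [u]) (X ! bump_index u X # X[bump_index u X := u])"
proof -
  define p where "p = bump_index u X"
  define A where "A = take p X"
  define B where "B = drop (Suc p) X"
  define z where "z = X ! p"
  have p: "p < length X"
    using bump_index_less_length by (simp add: p_def)
  have X: "X = A @ z # B" and X_upd: "X[p := u] = A @ u # B"
    unfolding A_def B_def z_def using p by (simp_all add: id_take_nth_drop upd_conv_take_nth_drop)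
  have zu: "z < u"
    using nth_bump_index_less by (simp add: z_def p_def)
  have A_ge: "\<forall>a\<in>set A. u \<le> a"
    unfolding A_def p_def by (auto simp: in_set_conv_nth le_nth_if_less_bump_index)
  have left: "twisted_equiv (z # B @ [u]) (z # u # B)"
    using nonincr zu unfolding X by (intro twisted_equiv_shift_left) (auto simp: sorted_wrt_append)
  have front: "twisted_equiv (A @ [z, u]) (z # A @ [u])"
    using nonincr A_ge zu unfolding X by (intro twisted_equiv_shift_front) (auto simp: sorted_wrt_append)
  have "twisted_equiv (X @ [u]) (A @ z # u # B)"
    using twisted_equiv_append[OF left, of A "[]"] by (simp add: X)
  also have "twisted_equiv \<dots> (z # A @ u # B)"
    using twisted_equiv_append[OF front, of "[]" B] by simp
  finally show ?thesis
    using X_upd by (simp add: p_def z_def)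
qed

end

fun insert_column :: "nat list \<Rightarrow> nat list \<Rightarrow> nat list \<times> nat list" where
  "insert_column X [] = ([], X)"
| "insert_column X (u # us) =
     (let r = insert_column (X[bump_index u X := u]) us in (X ! bump_index u X # fst r, snd r))"

definition insertable :: "nat list \<Rightarrow> nat list \<Rightarrow> bool" where
  "insertable X us \<longleftrightarrow> X \<noteq> [] \<and> nonincreasing X \<and> sorted_wrt (<) us \<and> (\<forall>u\<in>set us. last X < u)"

lemma insertable_ConsD: "insertable X (u # us) \<Longrightarrow> X \<noteq> [] \<and> nonincreasing X \<and> last X < u"
  by (simp add: insertable_def)

lemma insertable_bump:
  assumes "insertable X (u # us)"
  shows "insertable (X[bump_index u X := u]) us"
proof -
  have X: "X \<noteq> []" "nonincreasing X" "last X < u"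
    using insertable_ConsD[OF assms] by auto
  have "last (X[bump_index u X := u]) \<in> {last X, u}"
    using X(1) by (cases "bump_index u X = length X - 1") (auto simp: last_conv_nth nth_list_update)
  then show ?thesis
    using assms nonincreasing_bump[OF X] X(1) unfolding insertable_def by auto
qed

lemma length_insert_column [simp]:
  "length (fst (insert_column X us)) = length us"
  "length (snd (insert_column X us)) = length X"
  by (induction us arbitrary: X) (auto simp: Let_def)

lemma twisted_equiv_insert_column:
  "insertable X us \<Longrightarrow> twisted_equiv (X @ us) (fst (insert_column X us) @ snd (insert_column X us))"
proof (induction us arbitrary: X)
  case Nil
  then show ?case by simp
next
  case (Cons u us)
  let ?z = "X ! bump_index u X" and ?X' = "X[bump_index u X := u]"
  have "twisted_equiv ((X @ [u]) @ us) ((?z # ?X') @ us)"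
    using insertable_ConsD[OF Cons.prems] twisted_equiv_append[OF twisted_equiv_bump, of X u "[]" us]
    by simp
  also have "twisted_equiv \<dots> ([?z] @ (fst (insert_column ?X' us) @ snd (insert_column ?X' us)) @ [])"
    using twisted_equiv_append[OF Cons.IH[OF insertable_bump[OF Cons.prems]], of "[?z]" "[]"] by simp
  finally show ?case by (simp add: Let_def)
qed

lemma nonincreasing_insert_column: "insertable X us \<Longrightarrow> nonincreasing (snd (insert_column X us))"
proof (induction us arbitrary: X)
  case Nil
  then show ?case by (simp add: insertable_def)
next
  case (Cons u us)
  then show ?case using insertable_bump by (simp add: Let_def)
qed

lemma insert_column_mono:
  "insertable X us \<Longrightarrow> i < length X \<Longrightarrow> X ! i \<le> snd (insert_column X us) ! i"
proof (induction us arbitrary: X)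
  case Nil
  then show ?case by simp
next
  case (Cons u us)
  have "X ! i \<le> X[bump_index u X := u] ! i"
    using insertable_ConsD[OF Cons.prems(1)] nth_le_nth_bump by blast
  also have "\<dots> \<le> snd (insert_column (X[bump_index u X := u]) us) ! i"
    using Cons.IH[OF insertable_bump[OF Cons.prems(1)]] Cons.prems(2) by simp
  finally show ?case by (simp add: Let_def)
qed

lemma insert_column_hd_ge: "insertable X us \<Longrightarrow> u \<in> set us \<Longrightarrow> u \<le> snd (insert_column X us) ! 0"
proof (induction us arbitrary: X)
  case Nil
  then show ?case by simp
next
  case (Cons v us)
  let ?X' = "X[bump_index v X := v]"
  have X: "X \<noteq> []" "nonincreasing X" "last X < v"
    using insertable_ConsD[OF Cons.prems(1)] by auto
  have X': "insertable ?X' us"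
    using insertable_bump[OF Cons.prems(1)] .
  have "v = ?X' ! bump_index v X"
    using bump_index_less_length[OF X] by simp
  also have "\<dots> \<le> ?X' ! 0"
    using X' bump_index_less_length[OF X] by (intro nonincreasing_nth_le) (auto simp: insertable_def)
  also have "\<dots> \<le> snd (insert_column ?X' us) ! 0"
    using insert_column_mono[OF X', of 0] X(1) by simp
  finally show ?case
    using Cons.IH[OF X'] Cons.prems(2) by (auto simp: Let_def)
qed

lemma bumped_less_hd:
  "insertable X us \<Longrightarrow> z \<in> set (fst (insert_column X us)) \<Longrightarrow> z < snd (insert_column X us) ! 0"
proof (induction us arbitrary: X)
  case Nil
  then show ?case by simp
next
  case (Cons v us)
  have "X ! bump_index v X < v"
    using insertable_ConsD[OF Cons.prems(1)] nth_bump_index_less by blast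
  then show ?case
    using Cons.IH[OF insertable_bump[OF Cons.prems(1)]] Cons.prems
      insert_column_hd_ge[OF Cons.prems(1), of v]
    by (auto simp: Let_def)
qed

lemma bumped_ge:
  "insertable X us \<Longrightarrow> x \<in> set X \<Longrightarrow> \<forall>u\<in>set us. x < u \<Longrightarrow> z \<in> set (fst (insert_column X us)) \<Longrightarrow> x \<le> z"
proof (induction us arbitrary: X x)
  case Nil
  then show ?case by simp
next
  case (Cons u us)
  let ?X' = "X[bump_index u X := u]"
  have X: "X \<noteq> []" "nonincreasing X" "last X < u"
    using insertable_ConsD[OF Cons.prems(1)] by auto
  have "x \<le> X ! bump_index u X"
    using Cons.prems(2,3) nth_le_nth_bump_index[OF X] by (auto simp: in_set_conv_nth)
  moreover have "u \<le> z" if "z \<in> set (fst (insert_column ?X' us))"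
    using Cons.IH[OF insertable_bump[OF Cons.prems(1)] _ _ that] Cons.prems(1)
      bump_index_less_length[OF X]
    by (auto simp: insertable_def set_update_memI)
  ultimately show ?case
    using Cons.prems(3,4) by (fastforce simp: Let_def)
qed

lemma sorted_bumped: "insertable X us \<Longrightarrow> sorted_wrt (<) (fst (insert_column X us))"
proof (induction us arbitrary: X)
  case Nil
  then show ?case by simp
next
  case (Cons u us)
  let ?X' = "X[bump_index u X := u]"
  have X: "X \<noteq> []" "nonincreasing X" "last X < u"
    using insertable_ConsD[OF Cons.prems] by auto
  have "u \<le> z" if "z \<in> set (fst (insert_column ?X' us))" for z
    using bumped_ge[OF insertable_bump[OF Cons.prems] _ _ that] Cons.prems bump_index_less_length[OF X]
    by (auto simp: insertable_def set_update_memI)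
  then show ?case
    using Cons.IH[OF insertable_bump[OF Cons.prems]] nth_bump_index_less[OF X]
    by (fastforce simp: Let_def)
qed

lemma bumped_ge_prev:
  assumes "insertable X us" and "\<forall>i<length X. C ! i \<le> X ! i" and "nonincreasing C"
    and "length C = length X" and "z \<in> set (fst (insert_column X us))"
    and "0 < s" and "s < length X" and "snd (insert_column X us) ! s \<le> z"
  shows "C ! (s - 1) \<le> z"
  using assms
proof (induction us arbitrary: X z)
  case Nil
  then show ?case by simp
next
  case (Cons u us)
  let ?p = "bump_index u X" and ?X' = "X[bump_index u X := u]"
  have X: "X \<noteq> []" "nonincreasing X" "last X < u"
    using insertable_ConsD[OF Cons.prems(1)] by auto
  have p: "?p < length X"
    using bump_index_less_length[OF X] .
  have X': "insertable ?X' us"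
    using insertable_bump[OF Cons.prems(1)] .
  show ?case
  proof (cases "z = X ! ?p")
    case True
    have "?p < s"
    proof (rule ccontr)
      assume "\<not> ?p < s"
      then have "u \<le> ?X' ! s"
        using p X' nonincreasing_nth_le[of ?X' s ?p] by (simp add: insertable_def)
      also have "\<dots> \<le> snd (insert_column X (u # us)) ! s"
        using insert_column_mono[OF X', of s] Cons.prems(7) by (simp add: Let_def)
      finally show False
        using Cons.prems(8) True nth_bump_index_less[OF X] by simp
    qed
    then have "C ! (s - 1) \<le> C ! ?p"
      using Cons.prems(3,4,7) by (intro nonincreasing_nth_le) auto
    also have "\<dots> \<le> z"
      using Cons.prems(2) p True by simp
    finally show ?thesis .
  next
    case False
    have "\<forall>i<length ?X'. C ! i \<le> ?X' ! i"
      using Cons.prems(2) nth_le_nth_bump[OF X] order_trans by fastforce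
    then show ?thesis
      using Cons.IH[OF X'] Cons.prems False by (auto simp: Let_def)
  qed
qed

lemma insert_column_below_bound:
  assumes "insertable X us"
    and "\<forall>q<length X. X ! q = C ! q \<or> (\<forall>u\<in>set us. X ! q < u)"
    and "\<forall>q\<in>Q. 0 < q \<and> q < length X \<and> X ! q < bound q"
    and "\<forall>u\<in>set us. \<forall>q\<in>Q. u \<le> C ! (q - 1) \<longrightarrow> u < bound q"
    and "q \<in> Q"
  shows "snd (insert_column X us) ! q < bound q"
  using assms
proof (induction us arbitrary: X)
  case Nil
  then show ?case by simp
next
  case (Cons u us)
  let ?p = "bump_index u X" and ?X' = "X[bump_index u X := u]"
  have X: "X \<noteq> []" "nonincreasing X" "last X < u"
    using insertable_ConsD[OF Cons.prems(1)] by auto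
  have p: "?p < length X"
    using bump_index_less_length[OF X] .
  have u_less: "\<forall>w\<in>set us. u < w"
    using Cons.prems(1) by (simp add: insertable_def)
  have unchanged_or_less: "\<forall>q<length ?X'. ?X' ! q = C ! q \<or> (\<forall>w\<in>set us. ?X' ! q < w)"
  proof (intro allI impI)
    fix q assume "q < length ?X'"
    then show "?X' ! q = C ! q \<or> (\<forall>w\<in>set us. ?X' ! q < w)"
      using Cons.prems(2) u_less by (cases "q = ?p") auto
  qed
  have below: "\<forall>q\<in>Q. 0 < q \<and> q < length ?X' \<and> ?X' ! q < bound q"
  proof
    fix q assume q: "q \<in> Q"
    show "0 < q \<and> q < length ?X' \<and> ?X' ! q < bound q"
    proof (cases "q = ?p")
      case True
      text \<open>The entry above the bumping position is \<open>\<ge> u\<close>, so it cannot have been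
        overwritten yet: it is the original entry of \<open>C\<close>.\<close>
      have "u \<le> X ! (q - 1)"
        using True Cons.prems(3) q le_nth_if_less_bump_index[of "q - 1" u X] by auto
      moreover have "X ! (q - 1) = C ! (q - 1) \<or> X ! (q - 1) < u"
        using Cons.prems(2) p True by (metis diff_le_self le_less_trans list.set_intros(1))
      ultimately have "u < bound q"
        using Cons.prems(4) q by auto
      then show ?thesis
        using Cons.prems(3) q True p by simp
    qed (use Cons.prems(3) q in simp)
  qed
  show ?case
    using Cons.IH[OF insertable_bump[OF Cons.prems(1)] unchanged_or_less below] Cons.prems(4,5)
    by (simp add: Let_def)
qed

section \<open>Column words\<close>

definition columns_adjacent :: "nat list \<Rightarrow> nat list \<Rightarrow> bool" where
  "columns_adjacent A B \<longleftrightarrow> length B \<le> length A \<and>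
     (\<forall>j<length B. A ! (length A - 1 - j) < B ! (length B - 1 - j))"

lemma column_word_singleton [simp]: "column_word [A] \<longleftrightarrow> A \<noteq> [] \<and> nonincreasing A"
  by (simp add: column_word_def)

lemma column_word_Cons_Cons:
  "column_word (A # B # cs) \<longleftrightarrow>
     A \<noteq> [] \<and> nonincreasing A \<and> columns_adjacent A B \<and> column_word (B # cs)"
proof -
  have split: "(\<forall>i::nat. P i) \<longleftrightarrow> P 0 \<and> (\<forall>i. P (Suc i))" for P
    by (metis not0_implies_Suc)
  show ?thesis
    unfolding column_word_def columns_adjacent_def by (subst (1 2) split) auto
qed

lemma column_word_ConsD: "column_word (A # cs) \<Longrightarrow> column_word cs"
  by (cases cs) (simp add: column_word_def, simp add: column_word_Cons_Cons)

lemma column_word_hd: "column_word (A # cs) \<Longrightarrow> A \<noteq> [] \<and> nonincreasing A"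
  by (cases cs) (simp_all add: column_word_Cons_Cons)

lemma column_word_length_le: "column_word (A # cs) \<Longrightarrow> B \<in> set cs \<Longrightarrow> length B \<le> length A"
proof (induction cs arbitrary: A)
  case Nil
  then show ?case by simp
next
  case (Cons C cs)
  then show ?case
    by (force simp: column_word_Cons_Cons columns_adjacent_def)
qed

lemma columns_adjacent_last_less: "columns_adjacent A B \<Longrightarrow> A \<noteq> [] \<Longrightarrow> B \<noteq> [] \<Longrightarrow> last A < last B"
  unfolding columns_adjacent_def by (auto simp: last_conv_nth)

lemma column_word_last_less: "column_word (A # cs) \<Longrightarrow> x \<in> set (concat cs) \<Longrightarrow> last A < x"
proof (induction cs arbitrary: A)
  case Nil
  then show ?case by simp
next
  case (Cons B cs)
  have A: "A \<noteq> []" "columns_adjacent A B" and B: "column_word (B # cs)"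
    using Cons.prems(1) by (auto simp: column_word_Cons_Cons)
  have "B \<noteq> []" "nonincreasing B"
    using column_word_hd[OF B] by auto
  then have "last A < last B" and "\<forall>y\<in>set B. last B \<le> y"
    using columns_adjacent_last_less A by (auto simp: in_set_conv_nth last_conv_nth nonincreasing_nth_le)
  then show ?case
    using Cons.IH[OF B] Cons.prems(2) by fastforce
qed

lemma columns_adjacent_tl:
  assumes "columns_adjacent D G" and "length G < length D"
  shows "columns_adjacent (tl D) G"
  unfolding columns_adjacent_def
proof (intro conjI allI impI)
  show "length G \<le> length (tl D)"
    using assms(2) by simp
next
  fix j assume "j < length G"
  then show "tl D ! (length (tl D) - 1 - j) < G ! (length G - 1 - j)"
    using assms unfolding columns_adjacent_def by (auto simp: nth_tl Suc_diff_Suc)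
qed

lemma column_word_tl:
  assumes "column_word (D # cs)" and "tl D \<noteq> []" and "\<forall>G\<in>set cs. length G < length D"
  shows "column_word (tl D # cs)"
proof (cases cs)
  case Nil
  then show ?thesis
    using assms(1,2) by (cases D) auto
next
  case (Cons G cs')
  have "columns_adjacent (tl D) G"
    using assms Cons by (intro columns_adjacent_tl) (auto simp: column_word_Cons_Cons)
  then show ?thesis
    using assms Cons by (cases D) (auto simp: column_word_Cons_Cons)
qed

section \<open>Straightening a column word\<close>

definition reading :: "nat list list \<Rightarrow> nat list" where
  "reading bs = rev (map hd (tl bs)) @ hd bs @ concat (map tl (tl bs))"

definition straightening :: "nat list list \<Rightarrow> nat list list \<Rightarrow> bool" where
  "straightening cs bs \<longleftrightarrow>
     map length bs = map length cs \<and> sorted_wrt (>) (map hd bs) \<and>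
     column_word (hd bs # filter (\<lambda>s. s \<noteq> []) (map tl (tl bs))) \<and>
     twisted_equiv (concat cs) (reading bs)"

definition growth_bounds :: "nat list \<Rightarrow> nat list \<Rightarrow> nat list \<Rightarrow> bool" where
  "growth_bounds C X zs \<longleftrightarrow> (\<forall>i<length C. C ! i \<le> X ! i) \<and>
     (\<forall>z\<in>set zs. \<forall>s. 0 < s \<longrightarrow> s < length C \<longrightarrow> X ! s \<le> z \<longrightarrow> C ! (s - 1) \<le> z)"

lemma insert_column_growth_bounds:
  "insertable X us \<Longrightarrow> growth_bounds X (snd (insert_column X us)) (fst (insert_column X us))"
  unfolding growth_bounds_def
  using insert_column_mono bumped_ge_prev[of X us X] by (auto simp: insertable_def)

definition extend_straightening :: "nat list \<Rightarrow> nat list list \<Rightarrow> nat list list" where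
  "extend_straightening C bs =
     (let r = insert_column C (rev (map hd (tl bs)) @ [hd (hd bs)])
      in snd r # map2 (#) (rev (fst r)) (map tl bs))"

fun straighten :: "nat list list \<Rightarrow> nat list list" where
  "straighten [] = []"
| "straighten [C] = [C]"
| "straighten (C # cs) = extend_straightening C (straighten cs)"

lemma map2_Cons_sel:
  assumes "length xs = length ys"
  shows "map hd (map2 (#) xs ys) = xs" and "map tl (map2 (#) xs ys) = ys"
    and "map length (map2 (#) xs ys) = map (\<lambda>y. Suc (length y)) ys"
  using assms by (induction xs ys rule: list_induct2) auto

locale straightening_step =
  fixes A B D :: "nat list" and cs bs :: "nat list list"
  assumes word: "column_word (A # B # cs)"
    and straightened: "straightening (B # cs) (D # bs)"
    and grown: "growth_bounds B D (map hd bs)"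
begin

abbreviation inserted :: "nat list" where
  "inserted \<equiv> rev (map hd bs) @ [hd D]"

abbreviation bumped :: "nat list" where
  "bumped \<equiv> fst (insert_column A inserted)"

abbreviation first_column :: "nat list" where
  "first_column \<equiv> snd (insert_column A inserted)"

lemma column_A: "A \<noteq> []" "nonincreasing A" "columns_adjacent A B"
  using word by (simp_all add: column_word_Cons_Cons)

lemma column_B: "B \<noteq> []" "nonincreasing B" "column_word (B # cs)"
  using word column_word_hd by (auto simp: column_word_Cons_Cons)

lemma lengths: "length D = length B" "map length bs = map length cs"
  using straightened by (simp_all add: straightening_def)

lemma D_ne: "D \<noteq> []"
  using column_B(1) lengths(1) by auto

lemma bs_ne_and_shorter: "b \<in> set bs \<Longrightarrow> b \<noteq> [] \<and> length b \<le> length D"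
proof -
  assume "b \<in> set bs"
  then obtain c where "c \<in> set cs" "length c = length b"
    using lengths(2) by (metis imageE image_eqI list.set_map)
  moreover have "c \<noteq> []"
    using word \<open>c \<in> set cs\<close> by (auto simp: column_word_def)
  ultimately show ?thesis
    using column_word_length_le[OF column_B(3)] lengths(1) by fastforce
qed

lemma heads_sorted: "sorted_wrt (>) (hd D # map hd bs)"
  using straightened by (simp add: straightening_def)

lemma insertable: "insertable A inserted"
proof -
  have "set inserted \<subseteq> set (reading (D # bs))"
    using D_ne by (auto simp: reading_def)
  also have "\<dots> = set (concat (B # cs))"
    using straightened twisted_equiv_set[of "concat (B # cs)" "reading (D # bs)"]
    by (simp add: straightening_def)
  finally have "\<forall>u\<in>set inserted. last A < u"
    using column_word_last_less[OF word] by auto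
  moreover have "sorted_wrt (<) inserted"
    using heads_sorted by (auto simp: sorted_wrt_append sorted_wrt_rev)
  ultimately show ?thesis
    using column_A by (simp add: insertable_def)
qed

lemma extend_straightening_eq:
  "extend_straightening A (D # bs) = first_column # map2 (#) (rev bumped) (tl D # map tl bs)"
  by (simp add: extend_straightening_def Let_def)

lemma extension_sel:
  "hd (extend_straightening A (D # bs)) = first_column"
  "map hd (tl (extend_straightening A (D # bs))) = rev bumped"
  "map tl (tl (extend_straightening A (D # bs))) = tl D # map tl bs"
  "map length (tl (extend_straightening A (D # bs))) = map (\<lambda>b. Suc (length b)) (tl D # map tl bs)"
  using map2_Cons_sel[of "rev bumped" "tl D # map tl bs"] by (simp_all add: extend_straightening_eq)

lemma map_length_extension:
  "map length (extend_straightening A (D # bs)) = map length (A # B # cs)"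
proof -
  have "map (\<lambda>b. Suc (length (tl b))) (D # bs) = map length (D # bs)"
    using D_ne bs_ne_and_shorter by (intro map_cong) auto
  then have "map (\<lambda>b. Suc (length b)) (tl D # map tl bs) = map length (B # cs)"
    using lengths by (simp add: o_def)
  then show ?thesis
    using extension_sel(1,4) by (cases "extend_straightening A (D # bs)") simp_all
qed

lemma first_column_ne: "first_column \<noteq> []"
  using column_A(1) by (metis length_insert_column(2) length_0_conv)

lemma heads_sorted_extension: "sorted_wrt (>) (map hd (extend_straightening A (D # bs)))"
proof -
  have "\<forall>z\<in>set bumped. z < hd first_column"
    using bumped_less_hd[OF insertable] first_column_ne by (simp add: hd_conv_nth)
  moreover have "sorted_wrt (>) (rev bumped)"
    using sorted_bumped[OF insertable] by (simp add: sorted_wrt_rev)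
  ultimately show ?thesis
    using extension_sel(1,2) by (cases "extend_straightening A (D # bs)") simp_all
qed

lemma twisted_equiv_extension:
  "twisted_equiv (concat (A # B # cs)) (reading (extend_straightening A (D # bs)))"
proof -
  have "twisted_equiv (A @ concat (B # cs) @ []) (A @ reading (D # bs) @ [])"
    using straightened by (intro twisted_equiv_append) (simp add: straightening_def)
  also have "A @ reading (D # bs) @ [] = [] @ (A @ inserted) @ (tl D @ concat (map tl bs))"
    using D_ne by (cases D) (simp_all add: reading_def)
  also have "twisted_equiv \<dots> ([] @ (bumped @ first_column) @ (tl D @ concat (map tl bs)))"
    using twisted_equiv_insert_column[OF insertable] by (rule twisted_equiv_append)
  also have "\<dots> = reading (extend_straightening A (D # bs))"
    using extension_sel(1-3) by (simp add: reading_def)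
  finally show ?thesis by simp
qed

lemma growth_bounds_extension:
  "growth_bounds A (hd (extend_straightening A (D # bs))) (map hd (tl (extend_straightening A (D # bs))))"
  using insert_column_growth_bounds[OF insertable] extension_sel(1,2)
  by (simp add: growth_bounds_def)

abbreviation shift :: nat where
  "shift \<equiv> length A - length B"

lemma A_less_B:
  assumes "s < length B"
  shows "A ! (s + shift) < B ! s"
proof -
  define j where "j = length B - 1 - s"
  have "length B \<le> length A" and "\<forall>j<length B. A ! (length A - 1 - j) < B ! (length B - 1 - j)"
    using column_A(3) by (simp_all add: columns_adjacent_def)
  moreover have "j < length B"
    using assms by (simp add: j_def)
  ultimately have "A ! (length A - 1 - j) < B ! (length B - 1 - j)"
    by blast
  moreover have "length B - 1 - j = s"
    using assms by (simp add: j_def)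
  moreover have "length A - 1 - j = s + shift"
    using assms \<open>length B \<le> length A\<close> by (simp add: j_def)
  ultimately show ?thesis
    by simp
qed

lemma B_le_D: "s < length B \<Longrightarrow> B ! s \<le> D ! s"
  using grown by (simp add: growth_bounds_def)

lemma A_less_D: "s < length B \<Longrightarrow> A ! (s + shift) < D ! s"
  using A_less_B B_le_D by (rule less_le_trans)

text \<open>Such a \<open>u\<close> is smaller than \<open>B ! (s - 1) \<le> hd D\<close>, so it is a head of \<open>bs\<close> rather
  than \<open>hd D\<close>, and the growth bounds of \<open>B\<close> apply to it.\<close>

lemma inserted_less_D:
  assumes "u \<in> set inserted" and "0 < s" and "s < length B" and "u \<le> A ! (s - 1 + shift)"
  shows "u < D ! s"
proof -
  have "A ! (s - 1 + shift) < B ! (s - 1)"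
    by (rule A_less_B) (use assms(3) in linarith)
  with assms(4) have u_less: "u < B ! (s - 1)"
    by (rule le_less_trans)
  have "B ! (s - 1) \<le> B ! 0"
    using column_B(2) assms(3) by (intro nonincreasing_nth_le) auto
  also have "\<dots> \<le> hd D"
    using B_le_D[of 0] D_ne column_B(1) by (simp add: hd_conv_nth)
  finally have "u \<in> set (map hd bs)"
    using assms(1) u_less by auto
  moreover have "\<forall>z\<in>set (map hd bs). D ! s \<le> z \<longrightarrow> B ! (s - 1) \<le> z"
    using grown assms(2,3) by (simp add: growth_bounds_def)
  ultimately show ?thesis
    using u_less by (meson leI leD)
qed

lemma first_column_less_D: "0 < s \<Longrightarrow> s < length B \<Longrightarrow> first_column ! (s + shift) < D ! s"
proof -
  assume s: "0 < s" "s < length B"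
  let ?Q = "(\<lambda>s. s + shift) ` {0<..<length B}"
  have "length B \<le> length A"
    using column_A(3) by (simp add: columns_adjacent_def)
  then have "\<forall>q\<in>?Q. 0 < q \<and> q < length A \<and> A ! q < D ! (q - shift)"
    using A_less_D by auto
  moreover have "\<forall>u\<in>set inserted. \<forall>q\<in>?Q. u \<le> A ! (q - 1) \<longrightarrow> u < D ! (q - shift)"
    using inserted_less_D by (auto simp: Suc_diff_Suc)
  ultimately show ?thesis
    using insert_column_below_bound[OF insertable, of A ?Q "\<lambda>q. D ! (q - shift)" "s + shift"] s
    by simp
qed

lemma columns_adjacent_first_column: "columns_adjacent first_column (tl D)"
  unfolding columns_adjacent_def
proof (intro conjI allI impI)
  show "length (tl D) \<le> length first_column"
    using column_A(3) lengths(1) by (auto simp: columns_adjacent_def)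
next
  fix j assume j: "j < length (tl D)"
  then have "first_column ! ((length B - 1 - j) + shift) < D ! (length B - 1 - j)"
    using lengths(1) by (intro first_column_less_D) auto
  moreover have "(length B - 1 - j) + shift = length first_column - 1 - j"
    using column_A(3) j lengths(1) by (auto simp: columns_adjacent_def)
  ultimately show "first_column ! (length first_column - 1 - j) < tl D ! (length (tl D) - 1 - j)"
    using j lengths(1) by (simp add: nth_tl Suc_diff_Suc)
qed

lemma column_word_extension:
  "column_word (hd (extend_straightening A (D # bs)) #
     filter (\<lambda>s. s \<noteq> []) (map tl (tl (extend_straightening A (D # bs)))))"
proof -
  define F where "F = filter (\<lambda>s. s \<noteq> []) (map tl bs)"
  have D_F: "column_word (D # F)"
    using straightened by (simp add: straightening_def F_def)
  have F_shorter: "\<forall>G\<in>set F. length G < length D"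
  proof
    fix G assume "G \<in> set F"
    then obtain b where "b \<in> set bs" "G = tl b"
      by (auto simp: F_def)
    then show "length G < length D"
      using bs_ne_and_shorter[of b] D_ne by (cases D) auto
  qed
  have first: "first_column \<noteq> [] \<and> nonincreasing first_column"
    using first_column_ne nonincreasing_insert_column[OF insertable] by simp
  show ?thesis
  proof (cases "tl D = []")
    case True
    then have "\<forall>G\<in>set F. G = []"
      using F_shorter D_ne by (cases D) auto
    then have "F = []"
      by (auto simp: F_def filter_empty_conv)
    then show ?thesis
      using True first extension_sel(1,3) by (simp add: F_def)
  next
    case False
    then show ?thesis
      using first columns_adjacent_first_column column_word_tl[OF D_F False F_shorter] extension_sel(1,3)
      by (simp add: column_word_Cons_Cons F_def)
  qed
qed

theorem straightening_extension:
  "straightening (A # B # cs) (extend_straightening A (D # bs))"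
  unfolding straightening_def
  using map_length_extension heads_sorted_extension column_word_extension twisted_equiv_extension
  by blast

end

lemma straighten_invariant:
  "column_word cs \<Longrightarrow> cs \<noteq> [] \<Longrightarrow>
     straightening cs (straighten cs) \<and>
     growth_bounds (hd cs) (hd (straighten cs)) (map hd (tl (straighten cs)))"
proof (induction cs rule: straighten.induct)
  case 1
  then show ?case by simp
next
  case (2 C)
  then show ?case by (simp add: straightening_def reading_def growth_bounds_def)
next
  case (3 A B cs)
  have IH: "straightening (B # cs) (straighten (B # cs))"
    "growth_bounds B (hd (straighten (B # cs))) (map hd (tl (straighten (B # cs))))"
    using 3 column_word_ConsD by auto
  then obtain D bs where D_bs: "straighten (B # cs) = D # bs"
    by (cases "straighten (B # cs)") (auto simp: straightening_def)
  interpret straightening_step A B D cs bs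
    using 3 IH D_bs by unfold_locales auto
  show ?case
    using straightening_extension growth_bounds_extension D_bs by simp
qed

lemma set_reading: "\<forall>b\<in>set bs. b \<noteq> [] \<Longrightarrow> bs \<noteq> [] \<Longrightarrow> set (reading bs) = set (concat bs)"
proof -
  have "set b = insert (hd b) (set (tl b))" if "b \<noteq> []" for b :: "nat list"
    using that by (cases b) auto
  then show "\<forall>b\<in>set bs. b \<noteq> [] \<Longrightarrow> bs \<noteq> [] \<Longrightarrow> set (reading bs) = set (concat bs)"
    by (cases bs) (auto simp: reading_def)
qed

theorem lemma4p4:
  fixes cs :: "nat list list"
  assumes "cs \<noteq> []"
    and "column_word cs"
    and "pos_word (concat cs)"
  shows "\<exists>bs :: nat list list.
           map length bs = map length cs \<and>
           pos_word (concat bs) \<and>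
           sorted_wrt (\<lambda>x y. x > y) (map hd bs) \<and>
           column_word (hd bs # filter (\<lambda>s. s \<noteq> []) (map tl (tl bs))) \<and>
           twisted_equiv (concat cs)
             (rev (map hd (tl bs)) @ hd bs @ concat (map tl (tl bs)))"
proof -
  define bs where "bs = straighten cs"
  have bs: "straightening cs bs"
    using straighten_invariant assms(1,2) by (simp add: bs_def)
  have "0 \<notin> set (map length bs)"
    using assms(2) bs by (auto simp: column_word_def straightening_def)
  then have "\<forall>b\<in>set bs. b \<noteq> []" and "bs \<noteq> []"
    using bs assms(1) by (auto simp: straightening_def)
  then have "set (concat bs) = set (reading bs)"
    by (simp add: set_reading)
  also have "\<dots> = set (concat cs)"
    using bs twisted_equiv_set[of "concat cs" "reading bs"] by (simp add: straightening_def)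
  finally have "set (concat bs) = set (concat cs)" .
  then have "pos_word (concat bs)"
    using assms(3) by (simp add: pos_word_def)
  then show ?thesis
    using bs by (auto simp: straightening_def reading_def)
qed

end
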